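(* Let $n\ge 2$ and let $\chi$ be a simple game on $N=\{1,\dots,n\}$. For any two voters $i,j\in N$, either $\mathcal{BZ}(\chi,i)=\mathcal{BZ}(\chi,j)$ or $$\left|\mathcal{BZ}(\chi,i)-\mathcal{BZ}(\chi,j)\right|\ge\frac{2}{\left(\lfloor n/2\rfloor+1\right)\binom{n}{\lfloor n/2\rfloor+1}}.$$
   Context: A simple game on $N=\{1,\dots,n\}$ is a monotone Boolean function $\chi:2^N\to\{0,1\}$ (i.e. $\chi(U)\le\chi(U')$ for $U\subseteq U'$) with $\chi(\emptyset)=0$ and $\chi(N)=1$. An $i$-swing is a set $U\subseteq N\setminus\{i\}$ with $\chi(U)=0$ and $\chi(U\cup\{i\})=1$. The Banzhaf index is $\mathcal{BZ}(\chi,i)=\eta_i/m$, where $\eta_i$ is the number of $i$-swings and $m=\sum_{k=1}^n\eta_k$ is the total number of swings. *)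

theory Defs
  imports Complex_Main
begin

definition simple_game :: "nat \<Rightarrow> (nat set \<Rightarrow> bool) \<Rightarrow> bool" where
  "simple_game n \<chi> \<longleftrightarrow>
     (\<forall>U U'. U \<subseteq> U' \<and> U' \<subseteq> {1..n} \<and> \<chi> U \<longrightarrow> \<chi> U') \<and>
     \<not> \<chi> {} \<and> \<chi> {1..n}"

definition swings :: "nat \<Rightarrow> (nat set \<Rightarrow> bool) \<Rightarrow> nat \<Rightarrow> nat set set" where
  "swings n \<chi> i = {U. U \<subseteq> {1..n} - {i} \<and> \<not> \<chi> U \<and> \<chi> (insert i U)}"

definition eta :: "nat \<Rightarrow> (nat set \<Rightarrow> bool) \<Rightarrow> nat \<Rightarrow> nat" where
  "eta n \<chi> i = card (swings n \<chi> i)"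

definition total_swings :: "nat \<Rightarrow> (nat set \<Rightarrow> bool) \<Rightarrow> nat" where
  "total_swings n \<chi> = (\<Sum>k\<in>{1..n}. eta n \<chi> k)"

definition banzhaf :: "nat \<Rightarrow> (nat set \<Rightarrow> bool) \<Rightarrow> nat \<Rightarrow> real" where
  "banzhaf n \<chi> i = real (eta n \<chi> i) / real (total_swings n \<chi>)"

end

theory Submission
  imports Defs
begin

(* Write eta_i for the number of i-swings and m for the total number of swings.
   (1) Parity: splitting the coalitions avoiding i and j according to whether they contain j,
       the difference eta_i - eta_j is twice the difference between the numbers of
       coalitions S (avoiding i, j) with S + i winning and S + j losing and vice versa.
       Hence eta_i and eta_j are congruent modulo 2, and differ by at least 2 if they differ.
   (2) Size bound: let L_k be the winning coalitions of size k and c_k the number of pairs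
       (W, i) with W in L_k and i critical in W.  Double counting pairs (W, i), i in W,
       gives (k+1) |L_(k+1)| = c_(k+1) + (n-k) |L_k|, so with a_k = |L_k| / (n choose k)
       we get c_(k+1) = (k+1) (n choose k+1) (a_(k+1) - a_k).  Since m = sum of the c_k,
       a_0 = 0, a_n = 1 and (k+1) (n choose k+1) is maximal at k = n div 2, the sum
       telescopes to m <= (n div 2 + 1) (n choose (n div 2 + 1)).
   The theorem follows: two distinct Banzhaf indices differ by |eta_i - eta_j| / m >= 2 / m. *)

lemma simple_game_mono:
  assumes "simple_game n \<chi>" "U \<subseteq> U'" "U' \<subseteq> {1..n}" "\<chi> U"
  shows "\<chi> U'"
  using assms unfolding simple_game_def by blast

definition winning_level :: "nat \<Rightarrow> (nat set \<Rightarrow> bool) \<Rightarrow> nat \<Rightarrow> nat set set" where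
  "winning_level n \<chi> k = {W. W \<subseteq> {1..n} \<and> card W = k \<and> \<chi> W}"

definition critical_count :: "nat \<Rightarrow> (nat set \<Rightarrow> bool) \<Rightarrow> nat \<Rightarrow> nat" where
  "critical_count n \<chi> k =
     card (Sigma (winning_level n \<chi> k) (\<lambda>W. {i\<in>W. \<not> \<chi> (W - {i})}))"

definition winning_density :: "nat \<Rightarrow> (nat set \<Rightarrow> bool) \<Rightarrow> nat \<Rightarrow> real" where
  "winning_density n \<chi> k = real (card (winning_level n \<chi> k)) / real (n choose k)"

lemma finite_winning_level: "finite (winning_level n \<chi> k)"
  by (rule finite_subset[of _ "Pow {1..n}"]) (auto simp: winning_level_def)

lemma finite_winning_level_member: "W \<in> winning_level n \<chi> k \<Longrightarrow> finite W"
  by (auto simp: winning_level_def intro: finite_subset)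

lemma winning_level_0: "simple_game n \<chi> \<Longrightarrow> winning_level n \<chi> 0 = {}"
  by (auto simp: winning_level_def simple_game_def dest: finite_subset)

lemma winning_level_top: "simple_game n \<chi> \<Longrightarrow> winning_level n \<chi> n = {{1..n}}"
  using card_subset_eq[of "{1..n}"]
  by (auto simp: winning_level_def simple_game_def)

text \<open>Two expressions for the number of pairs (W, i) with |W| = k + 1 and i in W.\<close>

lemma Suc_times_choose_Suc:
  "k < n \<Longrightarrow> Suc k * (n choose Suc k) = (n - k) * (n choose k)"
  using Suc_times_binomial[of k "n - 1"] binomial_absorb_comp[of n k] by simp

text \<open>The quantity (k+1) (n choose k+1) = n (n-1 choose k) is maximal at k = n div 2.\<close>

lemma Suc_times_choose_Suc_le:
  assumes "k < n"
  shows "Suc k * (n choose Suc k) \<le> Suc (n div 2) * (n choose Suc (n div 2))"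
proof -
  obtain m where m: "n = Suc m" using assms by (cases n) auto
  have "m choose (n div 2) = m choose (m div 2)"
  proof (cases "even n")
    case True
    then have "m - n div 2 = m div 2" "n div 2 \<le> m" using m by presburger+
    then show ?thesis using binomial_symmetric[of "n div 2" m] by simp
  next
    case False
    then have "n div 2 = m div 2" using m by presburger
    then show ?thesis by simp
  qed
  then show ?thesis
    using Suc_times_binomial[of k m] Suc_times_binomial[of "n div 2" m] binomial_maximum[of m k] m
    by (metis mult_le_mono2)
qed

lemma noncritical_pairs_bij:
  assumes sg: "simple_game n \<chi>"
  shows "bij_betw (\<lambda>(W, i). (W - {i}, i))
           (SIGMA W:winning_level n \<chi> (Suc k). {i\<in>W. \<chi> (W - {i})})
           (SIGMA V:winning_level n \<chi> k. {1..n} - V)"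
    (is "bij_betw _ ?F ?G")
proof (rule bij_betw_byWitness[where f' = "\<lambda>(V, i). (insert i V, i)"])
  show "\<forall>a\<in>?F. (\<lambda>(V, i). (insert i V, i)) ((\<lambda>(W, i). (W - {i}, i)) a) = a"
    by auto
  show "\<forall>a\<in>?G. (\<lambda>(W, i). (W - {i}, i)) ((\<lambda>(V, i). (insert i V, i)) a) = a"
    by (auto simp: winning_level_def)
  show "(\<lambda>(W, i). (W - {i}, i)) ` ?F \<subseteq> ?G"
  proof (rule image_subsetI)
    fix x assume "x \<in> ?F"
    then obtain W i where x: "x = (W, i)" "W \<in> winning_level n \<chi> (Suc k)" "i \<in> W"
      "\<chi> (W - {i})" by auto
    then show "(\<lambda>(W, i). (W - {i}, i)) x \<in> ?G"
      using finite_winning_level_member[of W] by (auto simp: winning_level_def)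
  qed
  show "(\<lambda>(V, i). (insert i V, i)) ` ?G \<subseteq> ?F"
  proof (rule image_subsetI)
    fix x assume "x \<in> ?G"
    then obtain V i where x: "x = (V, i)" "V \<in> winning_level n \<chi> k" "i \<in> {1..n} - V"
      by auto
    then have "\<chi> (insert i V)"
      using simple_game_mono[OF sg, of V "insert i V"] by (auto simp: winning_level_def)
    moreover have "insert i V - {i} = V" using x by auto
    ultimately show "(\<lambda>(V, i). (insert i V, i)) x \<in> ?F"
      using x finite_winning_level_member[of V] by (auto simp: winning_level_def)
  qed
qed

text \<open>Double counting the pairs (W, i) with W winning of size k+1 and i in W: they are either
  critical, or correspond (by the bijection above) to a winning V of size k and a player
  i outside V.\<close>

lemma level_identity:
  assumes sg: "simple_game n \<chi>" and k: "k < n"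
  shows "Suc k * card (winning_level n \<chi> (Suc k))
           = critical_count n \<chi> (Suc k) + (n - k) * card (winning_level n \<chi> k)"
proof -
  let ?A = "winning_level n \<chi> (Suc k)"
  let ?B = "winning_level n \<chi> k"
  let ?E = "Sigma ?A (\<lambda>W. {i\<in>W. \<not> \<chi> (W - {i})})"
  let ?F = "Sigma ?A (\<lambda>W. {i\<in>W. \<chi> (W - {i})})"
  let ?G = "Sigma ?B (\<lambda>V. {1..n} - V)"
  note fin = finite_winning_level finite_winning_level_member
  have "card (Sigma ?A (\<lambda>W. W)) = (\<Sum>W\<in>?A. card W)"
    using fin by (simp add: card_SigmaI)
  then have all_pairs: "card (Sigma ?A (\<lambda>W. W)) = Suc k * card ?A"
    by (simp add: winning_level_def)
  have "Sigma ?A (\<lambda>W. W) = ?E \<union> ?F" "?E \<inter> ?F = {}" by auto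
  moreover have "finite ?E" "finite ?F" using fin by (auto intro!: finite_SigmaI)
  ultimately have split: "card (Sigma ?A (\<lambda>W. W)) = card ?E + card ?F"
    by (simp add: card_Un_disjoint)
  have "card ?F = card ?G" using bij_betw_same_card[OF noncritical_pairs_bij[OF sg]] .
  also have "card ?G = (\<Sum>V\<in>?B. card ({1..n} - V))" using fin by (simp add: card_SigmaI)
  also have "\<dots> = (\<Sum>V\<in>?B. n - k)"
    by (rule sum.cong) (auto simp: winning_level_def card_Diff_subset finite_subset)
  also have "\<dots> = (n - k) * card ?B" by simp
  finally show ?thesis using all_pairs split by (simp add: critical_count_def)
qed

lemma swings_critical_pairs_bij:
  "bij_betw (\<lambda>(i, U). (insert i U, i)) (SIGMA i:{1..n}. swings n \<chi> i)
     (SIGMA W:Pow {1..n}. {i\<in>W. \<chi> W \<and> \<not> \<chi> (W - {i})})"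
    (is "bij_betw _ ?S ?E")
proof (rule bij_betw_byWitness[where f' = "\<lambda>(W, i). (i, W - {i})"])
  show "\<forall>a\<in>?S. (\<lambda>(W, i). (i, W - {i})) ((\<lambda>(i, U). (insert i U, i)) a) = a"
    by (auto simp: swings_def)
  show "\<forall>a\<in>?E. (\<lambda>(i, U). (insert i U, i)) ((\<lambda>(W, i). (i, W - {i})) a) = a"
    by auto
  show "(\<lambda>(i, U). (insert i U, i)) ` ?S \<subseteq> ?E"
  proof (rule image_subsetI)
    fix x assume "x \<in> ?S"
    then obtain i U where x: "x = (i, U)" "i \<in> {1..n}" "U \<subseteq> {1..n} - {i}" "\<not> \<chi> U"
      "\<chi> (insert i U)" by (auto simp: swings_def)
    then have "insert i U - {i} = U" by auto
    with x show "(\<lambda>(i, U). (insert i U, i)) x \<in> ?E" by auto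
  qed
  show "(\<lambda>(W, i). (i, W - {i})) ` ?E \<subseteq> ?S"
    by (auto simp: swings_def insert_absorb)
qed

text \<open>Grouping the critical pairs by the size of the coalition, the total number of swings
  is the sum of the critical counts.\<close>

lemma total_swings_eq_critical_counts:
  assumes sg: "simple_game n \<chi>"
  shows "total_swings n \<chi> = (\<Sum>k<n. critical_count n \<chi> (Suc k))"
proof -
  let ?N = "{1..n::nat}"
  let ?S = "Sigma ?N (swings n \<chi>)"
  let ?crit = "\<lambda>W. {i\<in>W. \<chi> W \<and> \<not> \<chi> (W - {i})}"
  let ?E = "Sigma (Pow ?N) ?crit"
  have "finite (swings n \<chi> i)" for i
    by (rule finite_subset[of _ "Pow ?N"]) (auto simp: swings_def)
  then have "total_swings n \<chi> = card ?S"
    by (simp add: total_swings_def eta_def card_SigmaI)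
  also have "\<dots> = card ?E" by (rule bij_betw_same_card[OF swings_critical_pairs_bij])
  also have "\<dots> = (\<Sum>W\<in>Pow ?N. card (?crit W))"
    by (rule card_SigmaI) (auto intro: finite_subset)
  also have "\<dots> = (\<Sum>k<Suc n. \<Sum>W\<in>{W\<in>Pow ?N. card W = k}. card (?crit W))"
    by (rule sum.group[symmetric])
      (auto simp: less_Suc_eq_le dest!: card_mono[OF finite_atLeastAtMost])
  also have "\<dots> = (\<Sum>k<Suc n. critical_count n \<chi> k)"
  proof (rule sum.cong[OF refl])
    fix k
    have "critical_count n \<chi> k = (\<Sum>W\<in>winning_level n \<chi> k. card {i\<in>W. \<not> \<chi> (W - {i})})"
      unfolding critical_count_def
      by (rule card_SigmaI) (auto simp: finite_winning_level dest: finite_winning_level_member)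
    also have "\<dots> = (\<Sum>W\<in>{W\<in>Pow ?N. card W = k}. card (?crit W))"
      by (rule sum.mono_neutral_cong_left) (auto simp: winning_level_def)
    finally show "(\<Sum>W\<in>{W\<in>Pow ?N. card W = k}. card (?crit W)) = critical_count n \<chi> k" ..
  qed
  also have "\<dots> = (\<Sum>k<n. critical_count n \<chi> (Suc k))"
    by (simp only: sum.lessThan_Suc_shift) (simp add: critical_count_def winning_level_0[OF sg])
  finally show ?thesis .
qed

text \<open>Dividing the level identity by (k+1) (n choose k+1) = (n-k) (n choose k): the critical
  count at level k+1 is that factor times the increment of the winning density.  In
  particular the winning density is nondecreasing.\<close>

lemma critical_count_density_increment:
  assumes sg: "simple_game n \<chi>" and k: "k < n"
  shows "real (critical_count n \<chi> (Suc k))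
           = real (Suc k * (n choose Suc k))
             * (winning_density n \<chi> (Suc k) - winning_density n \<chi> k)"
proof -
  have pos: "real (n choose Suc k) > 0" "real (n choose k) > 0" using k by auto
  have "real (Suc k * (n choose Suc k)) * winning_density n \<chi> (Suc k)
          = real (Suc k) * real (card (winning_level n \<chi> (Suc k)))"
    unfolding winning_density_def using pos by (simp only: of_nat_mult) simp
  moreover have "real (Suc k * (n choose Suc k)) * winning_density n \<chi> k
          = real (n - k) * real (card (winning_level n \<chi> k))"
    unfolding winning_density_def Suc_times_choose_Suc[OF k] using pos
    by (simp only: of_nat_mult) simp
  moreover have "real (Suc k) * real (card (winning_level n \<chi> (Suc k)))
      = real (critical_count n \<chi> (Suc k)) + real (n - k) * real (card (winning_level n \<chi> k))"
    using arg_cong[OF level_identity[OF sg k], of real] by (simp only: of_nat_mult of_nat_add)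
  ultimately show ?thesis by (simp add: right_diff_distrib)
qed

text \<open>The total number of swings is at most (n div 2 + 1) (n choose (n div 2 + 1)):
  bound each factor in the previous lemma by its maximum and telescope the densities
  from 0 (no winning empty coalition) to 1 (N is winning).\<close>

lemma total_swings_le:
  assumes sg: "simple_game n \<chi>"
  shows "real (total_swings n \<chi>) \<le> real (Suc (n div 2) * (n choose Suc (n div 2)))"
proof -
  define M where "M = real (Suc (n div 2) * (n choose Suc (n div 2)))"
  let ?a = "winning_density n \<chi>"
  have step: "real (critical_count n \<chi> (Suc k)) \<le> M * (?a (Suc k) - ?a k)" if k: "k < n" for k
  proof -
    note incr = critical_count_density_increment[OF sg k]
    have "Suc k * (n choose Suc k) > 0" using k by simp
    then have "real (Suc k * (n choose Suc k)) > 0" by (metis of_nat_0_less_iff)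
    then have "?a (Suc k) - ?a k \<ge> 0"
      using incr by (metis of_nat_0_le_iff zero_le_mult_iff not_le)
    moreover have "real (Suc k * (n choose Suc k)) \<le> M"
      unfolding M_def using Suc_times_choose_Suc_le[OF k] by linarith
    ultimately show ?thesis using incr mult_right_mono by metis
  qed
  have "real (total_swings n \<chi>) = (\<Sum>k<n. real (critical_count n \<chi> (Suc k)))"
    by (simp add: total_swings_eq_critical_counts[OF sg])
  also have "\<dots> \<le> (\<Sum>k<n. M * (?a (Suc k) - ?a k))" by (rule sum_mono) (simp add: step)
  also have "\<dots> = M * (?a n - ?a 0)"
    by (simp add: sum_distrib_left[symmetric] sum_lessThan_telescope)
  also have "\<dots> = M"
    by (simp add: winning_density_def winning_level_0[OF sg] winning_level_top[OF sg])
  finally show ?thesis by (simp add: M_def)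
qed

lemma swings_split:
  assumes "i \<noteq> j" "j \<in> {1..n}"
  shows "swings n \<chi> i = {S\<in>Pow ({1..n} - {i, j}). \<not> \<chi> S \<and> \<chi> (insert i S)}
     \<union> insert j ` {S\<in>Pow ({1..n} - {i, j}). \<not> \<chi> (insert j S) \<and> \<chi> (insert i (insert j S))}"
    (is "_ = ?A \<union> insert j ` ?B")
proof
  show "swings n \<chi> i \<subseteq> ?A \<union> insert j ` ?B"
  proof
    fix U assume U: "U \<in> swings n \<chi> i"
    show "U \<in> ?A \<union> insert j ` ?B"
    proof (cases "j \<in> U")
      case True
      then have "U = insert j (U - {j})" "U - {j} \<in> ?B"
        using U assms by (auto simp: swings_def insert_absorb)
      then show ?thesis by blast
    qed (use U in \<open>auto simp: swings_def\<close>)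
  qed
  show "?A \<union> insert j ` ?B \<subseteq> swings n \<chi> i"
    using assms by (auto simp: swings_def insert_commute)
qed

lemma card_filter_eq_sum_indicator:
  "finite X \<Longrightarrow> card {x\<in>X. P x} = (\<Sum>x\<in>X. if P x then 1 else 0)"
  by (simp add: sum.inter_filter[symmetric])

lemma eta_as_sum:
  assumes "i \<noteq> j" "j \<in> {1..n}"
  shows "eta n \<chi> i = (\<Sum>S\<in>Pow ({1..n} - {i, j}).
     (if \<not> \<chi> S \<and> \<chi> (insert i S) then 1 else 0) +
     (if \<not> \<chi> (insert j S) \<and> \<chi> (insert i (insert j S)) then 1 else 0))"
proof -
  let ?X = "Pow ({1..n} - {i, j})"
  let ?A = "{S\<in>?X. \<not> \<chi> S \<and> \<chi> (insert i S)}"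
  let ?B = "{S\<in>?X. \<not> \<chi> (insert j S) \<and> \<chi> (insert i (insert j S))}"
  have finite_X: "finite ?X" by simp
  have "inj_on (insert j) ?B"
  proof (rule inj_onI)
    fix S T assume "S \<in> ?B" "T \<in> ?B" "insert j S = insert j T"
    then have "j \<notin> S" "j \<notin> T" "insert j S - {j} = insert j T - {j}" by auto
    then show "S = T" by auto
  qed
  then have "card (insert j ` ?B) = card ?B" by (rule card_image)
  moreover have "card (?A \<union> insert j ` ?B) = card ?A + card (insert j ` ?B)"
    by (rule card_Un_disjoint) auto
  ultimately have "eta n \<chi> i = card ?A + card ?B"
    unfolding eta_def swings_split[OF assms] by simp
  also have "\<dots> = (\<Sum>S\<in>?X. if \<not> \<chi> S \<and> \<chi> (insert i S) then 1 else 0) +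
     (\<Sum>S\<in>?X. if \<not> \<chi> (insert j S) \<and> \<chi> (insert i (insert j S)) then 1 else 0)"
    by (simp only: card_filter_eq_sum_indicator[OF finite_X])
  finally show ?thesis by (simp add: sum.distrib)
qed

text \<open>Pointwise, for S avoiding i and j, the four swing indicators at S satisfy
  [i-swings] + 2 [S+j wins, S+i loses] = [j-swings] + 2 [S+i wins, S+j loses];
  this only uses monotonicity on the square S, S+i, S+j, S+i+j.  Summing over S shows
  that eta_i and eta_j differ by an even number.\<close>

lemma swing_count_identity:
  assumes sg: "simple_game n \<chi>" and ij: "i \<noteq> j" "i \<in> {1..n}" "j \<in> {1..n}"
  defines "X \<equiv> Pow ({1..n} - {i, j})"
  shows "eta n \<chi> i + 2 * (\<Sum>S\<in>X. if \<chi> (insert j S) \<and> \<not> \<chi> (insert i S) then 1 else 0)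
       = eta n \<chi> j + 2 * (\<Sum>S\<in>X. if \<chi> (insert i S) \<and> \<not> \<chi> (insert j S) then 1 else 0)"
proof -
  have "{1..n} - {j, i} = {1..n} - {i, j}" by auto
  then have eta_j: "eta n \<chi> j = (\<Sum>S\<in>X.
     (if \<not> \<chi> S \<and> \<chi> (insert j S) then 1 else 0) +
     (if \<not> \<chi> (insert i S) \<and> \<chi> (insert i (insert j S)) then 1 else 0))"
    using eta_as_sum[of j i n \<chi>] ij by (simp add: X_def insert_commute)
  show ?thesis
    unfolding eta_as_sum[OF ij(1) ij(3)] eta_j X_def[symmetric] sum_distrib_left
      sum.distrib[symmetric]
  proof (rule sum.cong[OF refl])
    fix S assume "S \<in> X"
    then have "insert i (insert j S) \<subseteq> {1..n}" "insert i S \<subseteq> {1..n}" "insert j S \<subseteq> {1..n}"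
      using ij by (auto simp: X_def)
    then have "\<chi> S \<longrightarrow> \<chi> (insert i S)" "\<chi> S \<longrightarrow> \<chi> (insert j S)"
      "\<chi> (insert i S) \<longrightarrow> \<chi> (insert i (insert j S))"
      "\<chi> (insert j S) \<longrightarrow> \<chi> (insert i (insert j S))"
      using simple_game_mono[OF sg] by (meson insert_mono subset_insertI)+
    then show "(if \<not> \<chi> S \<and> \<chi> (insert i S) then 1 else 0) +
         (if \<not> \<chi> (insert j S) \<and> \<chi> (insert i (insert j S)) then 1 else 0) +
         2 * (if \<chi> (insert j S) \<and> \<not> \<chi> (insert i S) then 1 else 0) =
         (if \<not> \<chi> S \<and> \<chi> (insert j S) then 1 else 0) +
         (if \<not> \<chi> (insert i S) \<and> \<chi> (insert i (insert j S)) then 1 else 0) +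
         2 * (if \<chi> (insert i S) \<and> \<not> \<chi> (insert j S) then 1 else (0::nat))"
      by auto
  qed
qed

lemma eta_parity:
  assumes "simple_game n \<chi>" "i \<in> {1..n}" "j \<in> {1..n}"
  shows "even (eta n \<chi> i + eta n \<chi> j)"
proof (cases "i = j")
  case False
  have "even (a + b)" if "a + 2 * q = b + 2 * p" for a b p q :: nat
    using that by presburger
  then show ?thesis using swing_count_identity[OF assms(1) False assms(2,3)] by blast
qed simp

lemma same_parity_fraction_gap:
  fixes a b m :: nat and M :: real
  assumes "even (a + b)" "a \<noteq> b" "0 < m" "real m \<le> M"
  shows "\<bar>real a / real m - real b / real m\<bar> \<ge> 2 / M"
proof -
  have "\<bar>int a - int b\<bar> \<ge> 2" using assms(1,2) by presburger
  then have gap: "\<bar>real a - real b\<bar> \<ge> 2" by linarith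
  have "2 / M \<le> 2 / real m" using assms(3,4) by (simp add: frac_le)
  also have "\<dots> \<le> \<bar>real a - real b\<bar> / real m" using gap assms(3) by (simp add: divide_right_mono)
  also have "\<dots> = \<bar>real a / real m - real b / real m\<bar>"
    by (simp add: diff_divide_distrib[symmetric])
  finally show ?thesis .
qed

theorem mainTheorem6:
  fixes n :: nat and \<chi> :: "nat set \<Rightarrow> bool" and i j :: nat
  assumes "n \<ge> 2"
    and "simple_game n \<chi>"
    and "i \<in> {1..n}" and "j \<in> {1..n}"
  shows "banzhaf n \<chi> i = banzhaf n \<chi> j \<or>
         \<bar>banzhaf n \<chi> i - banzhaf n \<chi> j\<bar> \<ge>
           2 / (real (n div 2 + 1) * real (n choose (n div 2 + 1)))"
proof (cases "eta n \<chi> i = eta n \<chi> j")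
  case False
  have "eta n \<chi> i \<le> total_swings n \<chi>" "eta n \<chi> j \<le> total_swings n \<chi>"
    unfolding total_swings_def using assms(3,4) by (auto intro!: member_le_sum)
  with False have "0 < total_swings n \<chi>" by linarith
  moreover have "real (total_swings n \<chi>) \<le> real (n div 2 + 1) * real (n choose (n div 2 + 1))"
    using total_swings_le[OF assms(2)] by (simp add: algebra_simps)
  ultimately show ?thesis
    using same_parity_fraction_gap[OF eta_parity[OF assms(2-4)] False]
    by (simp add: banzhaf_def)
qed (simp add: banzhaf_def)

end
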